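(* Let $K\lhd\Gamma$ be finitely presented groups with $\Gamma/K\cong\mathbb{Z}$. Let $\mathcal{A}$ be a finite generating set for $K$, let $t\in\Gamma$ be an element whose image generates $\Gamma/K$, and let $\theta$ be the automorphism $x\mapsto txt^{-1}$ of $K$. Let $\mathcal{P}_K=\langle\mathcal{A}\mid\mathcal{R}\rangle$ be a presentation of $K$, and for each $a\in\mathcal{A}$ let $w_a$ be a word over $\mathcal{A}^{\pm1}$ representing $\theta(a)$. Let $\mathcal{S}=\{tat^{-1}w_a^{-1}: a\in\mathcal{A}\}$ and $\mathcal{P}_\Gamma=\langle\mathcal{A},t\mid\mathcal{R},\mathcal{S}\rangle$ (a presentation of $\Gamma$). For each $k\in\mathbb{Z}$ let $\Phi_k$ be an endomorphism of the free monoid on $\mathcal{A}^{\pm1}$ which lifts $\theta^k$ and commutes with formal inversion of words, with $\Phi_0$ the identity. Let $\overline{\mathcal{R}}=\{\Phi_k(r): r\in\mathcal{R}, k\in\mathbb{Z}\}$, $\overline{\mathcal{S}}=\{\Phi_{k+1}(a)\Phi_k(w_a)^{-1}: a\in\mathcal{A}, k\in\mathbb{Z}\}$, and $\mathcal{P}_K^\infty=\langle\mathcal{A}\mid\overline{\mathcal{R}},\overline{\mathcal{S}}\rangle$ (a presentation of $K$), with index $\|\omega\|$ on $\overline{\mathcal{R}}\cup\overline{\mathcal{S}}$ defined as the minimal $|k|$ such that either $\omega\equiv\Phi_k(r)$ for some $r\in\mathcal{R}$ or $\omega\equiv\Phi_{k+1}(a)\Phi_k(w_a)^{-1}$ for some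 $a\in\mathcal{A}$. If $(\alpha,\rho)$ is an area-radius pair for $\mathcal{P}_\Gamma$, then $(\alpha,\rho)$ is an area-penetration pair for $(\mathcal{P}_K^\infty,\|\cdot\|)$.
   Context: $\equiv$ denotes equality of words (letter by letter). For a presentation $\mathcal{P}=\langle\mathcal{B}\mid\mathcal{T}\rangle$ with $\mathcal{B}$ finite and a word $w$ over $\mathcal{B}^{\pm1}$ representing the identity, a null-$\mathcal{P}$-expression is a sequence $(x_i,r_i)_{i=1}^m$ with $x_i$ words and $r_i\in\mathcal{T}^{\pm1}$ such that $w$ is freely equal to $\prod_{i=1}^m x_ir_ix_i^{-1}$; its area is $m$ and radius $\max_i|x_i|$. $(\alpha,\rho)$ is an area-radius pair for $\mathcal{P}$ if every null-homotopic word of length $\le n$ has a null-$\mathcal{P}$-expression with area $\le\alpha(n)$ and radius $\le\rho(n)$. Given an index $\|\cdot\|:\mathcal{T}\to\mathbb{N}$ (extended by $\|r^{-1}\|=\|r\|$), $(\alpha,\pi)$ is an area-penetration pair for $(\mathcal{P},\|\cdot\|)$ if every null-homotopic word of length $\le n$ has a null-$\mathcal{P}$-expression $(x_i,r_i)_{i=1}^m$ with $m\le\alpha(n)$ and $\|r_i\|\le\pi(n)$ for all $i$. *)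

theory Defs
  imports "HOL-Algebra.Algebra"
begin

text \<open>Words over an alphabet: lists of letters (x, b), where b = True means x and
  b = False means the formal inverse x^-1.\<close>
type_synonym 'a word = "('a \<times> bool) list"

definition words :: "'a set \<Rightarrow> 'a word set" where
  "words B = {w. \<forall>l \<in> set w. fst l \<in> B}"

definition inv_letter :: "'a \<times> bool \<Rightarrow> 'a \<times> bool" where
  "inv_letter l = (fst l, \<not> snd l)"

definition winv :: "'a word \<Rightarrow> 'a word" where
  "winv w = rev (map inv_letter w)"

inductive red1 :: "'a word \<Rightarrow> 'a word \<Rightarrow> bool" where
  "red1 (u @ [l, inv_letter l] @ v) (u @ v)"

definition free_eq :: "'a word \<Rightarrow> 'a word \<Rightarrow> bool" where
  "free_eq = equivclp red1"

definition null_expr :: "'a set \<Rightarrow> 'a word set \<Rightarrow> 'a word \<Rightarrow> ('a word \<times> 'a word) list \<Rightarrow> bool" where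
  "null_expr B T w es \<longleftrightarrow>
     (\<forall>(x, r) \<in> set es. x \<in> words B \<and> (r \<in> T \<or> r \<in> winv ` T)) \<and>
     free_eq w (concat (map (\<lambda>(x, r). x @ r @ winv x) es))"

definition null_hom :: "'a set \<Rightarrow> 'a word set \<Rightarrow> 'a word \<Rightarrow> bool" where
  "null_hom B T w \<longleftrightarrow> w \<in> words B \<and> (\<exists>es. null_expr B T w es)"

definition area_radius_pair ::
  "'a set \<Rightarrow> 'a word set \<Rightarrow> (nat \<Rightarrow> nat) \<Rightarrow> (nat \<Rightarrow> nat) \<Rightarrow> bool" where
  "area_radius_pair B T \<alpha> \<rho> \<longleftrightarrow>
     (\<forall>n w. null_hom B T w \<and> length w \<le> n \<longrightarrow>
        (\<exists>es. null_expr B T w es \<and> length es \<le> \<alpha> n \<and>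
              (\<forall>(x, r) \<in> set es. length x \<le> \<rho> n)))"

text \<open>Area-penetration pair; the index is extended to inverses by ||r^-1|| = ||r||.\<close>
definition area_pen_pair ::
  "'a set \<Rightarrow> 'a word set \<Rightarrow> ('a word \<Rightarrow> nat) \<Rightarrow> (nat \<Rightarrow> nat) \<Rightarrow> (nat \<Rightarrow> nat) \<Rightarrow> bool" where
  "area_pen_pair B T idx \<alpha> \<pi> \<longleftrightarrow>
     (\<forall>n w. null_hom B T w \<and> length w \<le> n \<longrightarrow>
        (\<exists>es. null_expr B T w es \<and> length es \<le> \<alpha> n \<and>
              (\<forall>(x, r) \<in> set es. \<exists>r0 \<in> T. (r = r0 \<or> r = winv r0) \<and> idx r0 \<le> \<pi> n)))"

definition wval :: "('g, 'b) monoid_scheme \<Rightarrow> 'g word \<Rightarrow> 'g" where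
  "wval G w = foldr (\<lambda>l acc. (if snd l then fst l else inv\<^bsub>G\<^esub> (fst l)) \<otimes>\<^bsub>G\<^esub> acc) w \<one>\<^bsub>G\<^esub>"

definition presents :: "('g, 'b) monoid_scheme \<Rightarrow> 'g set \<Rightarrow> 'g word set \<Rightarrow> bool" where
  "presents G A R \<longleftrightarrow> A \<subseteq> carrier G \<and> R \<subseteq> words A \<and>
     carrier G = wval G ` words A \<and>
     (\<forall>w \<in> words A. wval G w = \<one>\<^bsub>G\<^esub> \<longleftrightarrow> null_hom A R w)"

definition finitely_presented :: "('g, 'b) monoid_scheme \<Rightarrow> bool" where
  "finitely_presented G \<longleftrightarrow> (\<exists>A R. finite A \<and> finite R \<and> presents G A R)"

definition phi_ext :: "('a \<Rightarrow> 'a word) \<Rightarrow> 'a word \<Rightarrow> 'a word" where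
  "phi_ext f w = concat (map (\<lambda>l. if snd l then f (fst l) else winv (f (fst l))) w)"

definition Rbar :: "(int \<Rightarrow> 'a \<Rightarrow> 'a word) \<Rightarrow> 'a word set \<Rightarrow> 'a word set" where
  "Rbar \<Phi> R = {phi_ext (\<Phi> k) r | r k. r \<in> R}"

definition Sbar :: "(int \<Rightarrow> 'a \<Rightarrow> 'a word) \<Rightarrow> 'a set \<Rightarrow> ('a \<Rightarrow> 'a word) \<Rightarrow> 'a word set" where
  "Sbar \<Phi> A w = {\<Phi> (k + 1) a @ winv (phi_ext (\<Phi> k) (w a)) | a k. a \<in> A}"

definition Kidx :: "(int \<Rightarrow> 'a \<Rightarrow> 'a word) \<Rightarrow> 'a set \<Rightarrow> 'a word set \<Rightarrow> ('a \<Rightarrow> 'a word) \<Rightarrow> 'a word \<Rightarrow> nat" where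
  "Kidx \<Phi> A R w \<omega> = (LEAST m. \<exists>k. m = nat \<bar>k\<bar> \<and>
      ((\<exists>r \<in> R. \<omega> = phi_ext (\<Phi> k) r) \<or>
       (\<exists>a \<in> A. \<omega> = \<Phi> (k + 1) a @ winv (phi_ext (\<Phi> k) (w a)))))"

definition Sset :: "'a \<Rightarrow> 'a set \<Rightarrow> ('a \<Rightarrow> 'a word) \<Rightarrow> 'a word set" where
  "Sset t A w = {[(t, True), (a, True), (t, False)] @ winv (w a) | a. a \<in> A}"

end

theory Submission
  imports Defs
begin

text \<open>A word over \<open>A \<union> {t}\<close> is mapped to a word over \<open>A\<close> by reading it from left to
  right, keeping track of the exponent sum \<open>k\<close> of the letters \<open>t\<^sup>\<plusminus>\<^sup>1\<close> read so far, deleting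
  those letters and replacing every other letter \<open>a\<^sup>\<plusminus>\<^sup>1\<close> by \<open>\<Phi>\<^sub>k(a)\<^sup>\<plusminus>\<^sup>1\<close>; this rewrites
  \<open>t\<^sup>k a t\<^sup>-\<^sup>k\<close> as \<open>\<Phi>\<^sub>k(a)\<close>. The map respects free equality, sends a conjugate \<open>x r x\<^sup>-\<^sup>1\<close> of a
  relator of \<open>\<P>\<^sub>\<Gamma>\<close> to the conjugate of a relator of \<open>\<P>\<^sub>K\<^sup>\<infinity>\<close> of index at most \<open>|x|\<close>, and is
  the identity on words over \<open>A\<close>. Applying it to a null-\<open>\<P>\<^sub>\<Gamma>\<close>-expression of radius \<open>\<le> \<rho>(n)\<close>
  for a word \<open>u\<close> over \<open>A\<close> therefore gives a null-\<open>\<P>\<^sub>K\<^sup>\<infinity>\<close>-expression for \<open>u\<close> of the same area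
  and penetration \<open>\<le> \<rho>(n)\<close>. That \<open>u\<close> is null-homotopic in \<open>\<P>\<^sub>\<Gamma>\<close> at all holds because all
  relators of \<open>\<P>\<^sub>K\<^sup>\<infinity>\<close> are trivial in \<open>\<Gamma>\<close>.\<close>

subsection \<open>Words, free equality and extended endomorphisms\<close>

lemma equivclp_map:
  assumes "\<And>a b. r a b \<Longrightarrow> equivclp s (f a) (f b)" and "equivclp r x y"
  shows "equivclp s (f x) (f y)"
  using assms(2)
proof (induction rule: equivclp_induct)
  case base
  then show ?case by (simp add: equivclp_def)
next
  case (step y z)
  have "equivclp s (f y) (f z)"
    using step(2) assms(1) equivclp_sym by metis
  with step(3) show ?case using transpD[OF transp_equivclp] by metis
qed

lemma free_eq_refl [simp]: "free_eq x x"
  by (simp add: free_eq_def equivclp_def)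

lemma free_eq_trans: "free_eq x y \<Longrightarrow> free_eq y z \<Longrightarrow> free_eq x z"
  unfolding free_eq_def using transpD[OF transp_equivclp] by metis

lemma red1_imp_free_eq: "red1 x y \<Longrightarrow> free_eq x y"
  unfolding free_eq_def equivclp_def by (simp add: r_into_rtranclp)

lemma inv_letter_inv_letter [simp]: "inv_letter (inv_letter l) = l"
  by (simp add: inv_letter_def)

lemma winv_Nil [simp]: "winv [] = []"
  by (simp add: winv_def)

lemma winv_Cons [simp]: "winv (l # ls) = winv ls @ [inv_letter l]"
  by (simp add: winv_def)

lemma winv_append [simp]: "winv (u @ v) = winv v @ winv u"
  by (simp add: winv_def)

lemma winv_winv [simp]: "winv (winv u) = u"
  by (induction u) auto

lemma free_eq_cancel: "free_eq (p @ z @ winv z @ q) (p @ q)"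
proof (induction z arbitrary: p q)
  case Nil
  then show ?case by simp
next
  case (Cons l ls)
  have "free_eq ((p @ [l]) @ ls @ winv ls @ ([inv_letter l] @ q)) ((p @ [l]) @ ([inv_letter l] @ q))"
    by (rule Cons)
  moreover have "red1 (p @ [l, inv_letter l] @ q) (p @ q)"
    by (rule red1.intros)
  ultimately show ?case
    by (auto intro: free_eq_trans red1_imp_free_eq)
qed

lemma words_winv [simp]: "winv u \<in> words B \<longleftrightarrow> u \<in> words B"
  by (auto simp: words_def winv_def inv_letter_def)

lemma words_append [simp]: "u @ v \<in> words B \<longleftrightarrow> u \<in> words B \<and> v \<in> words B"
  by (auto simp: words_def)

lemma phi_ext_Nil [simp]: "phi_ext f [] = []"
  by (simp add: phi_ext_def)

lemma phi_ext_append [simp]: "phi_ext f (u @ v) = phi_ext f u @ phi_ext f v"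
  by (simp add: phi_ext_def)

lemma phi_ext_Cons: "phi_ext f (l # u) = phi_ext f [l] @ phi_ext f u"
  by (simp add: phi_ext_def)

lemma phi_ext_inv_letter: "phi_ext f [inv_letter l] = winv (phi_ext f [l])"
  by (simp add: phi_ext_def inv_letter_def)

lemma phi_ext_words:
  "\<forall>a \<in> B. f a \<in> words C \<Longrightarrow> u \<in> words B \<Longrightarrow> phi_ext f u \<in> words C"
proof (induction u)
  case (Cons l u)
  then have "f (fst l) \<in> words C" "u \<in> words B"
    by (auto simp: words_def)
  with Cons show ?case
    using phi_ext_Cons[of f l u] by (simp add: phi_ext_def)
qed (simp add: words_def)

lemma phi_ext_eq_self: "\<forall>a \<in> B. f a = [(a, True)] \<Longrightarrow> u \<in> words B \<Longrightarrow> phi_ext f u = u"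
  by (induction u) (auto simp: phi_ext_def words_def inv_letter_def)

lemma null_hom_relator: "r \<in> T \<Longrightarrow> r \<in> words B \<Longrightarrow> null_hom B T r"
  unfolding null_hom_def null_expr_def
  by (rule conjI, assumption, rule exI[of _ "[([], r)]"]) (simp add: words_def)

lemma null_hom_mono: "null_hom B T u \<Longrightarrow> B \<subseteq> B' \<Longrightarrow> T \<subseteq> T' \<Longrightarrow> null_hom B' T' u"
  unfolding null_hom_def null_expr_def words_def by fastforce


subsection \<open>Evaluating words in a group\<close>

text \<open>Letters outside \<open>S\<close> are evaluated as \<open>\<one>\<close>. This makes the value invariant under free
  equality with no hypothesis on the letters of the intermediate words, which are arbitrary.\<close>
definition wval_on :: "('g, 'b) monoid_scheme \<Rightarrow> 'g set \<Rightarrow> 'g word \<Rightarrow> 'g" where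
  "wval_on G S w = foldr (\<lambda>l acc. if fst l \<in> S
     then (if snd l then fst l else inv\<^bsub>G\<^esub> (fst l)) \<otimes>\<^bsub>G\<^esub> acc else acc) w \<one>\<^bsub>G\<^esub>"

context group
begin

lemma wval_on_Nil [simp]: "wval_on G S [] = \<one>"
  by (simp add: wval_on_def)

lemma wval_on_Cons:
  "wval_on G S (l # ls) =
    (if fst l \<in> S then (if snd l then fst l else inv (fst l)) \<otimes> wval_on G S ls else wval_on G S ls)"
  by (simp add: wval_on_def)

lemma wval_on_closed [simp]: "S \<subseteq> carrier G \<Longrightarrow> wval_on G S w \<in> carrier G"
  by (induction w) (auto simp: wval_on_Cons)

lemma wval_on_append:
  assumes "S \<subseteq> carrier G"
  shows "wval_on G S (u @ v) = wval_on G S u \<otimes> wval_on G S v"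
  using assms by (induction u) (auto simp: wval_on_Cons m_assoc subset_iff)

lemma wval_on_winv:
  assumes "S \<subseteq> carrier G"
  shows "wval_on G S (winv u) = inv (wval_on G S u)"
  using assms
  by (induction u) (auto simp: wval_on_append wval_on_Cons inv_letter_def inv_mult_group subset_iff)

lemma wval_on_free_eq:
  assumes "S \<subseteq> carrier G" and "free_eq u v"
  shows "wval_on G S u = wval_on G S v"
proof -
  have cancel: "wval_on G S (l # inv_letter l # v) = wval_on G S v" for l v
    using assms(1) by (auto simp: wval_on_Cons inv_letter_def m_assoc[symmetric] subset_iff)
  have "wval_on G S x = wval_on G S y" if "red1 x y" for x y
    using that by cases (simp add: wval_on_append assms(1) cancel)
  with assms(2) show ?thesis
    unfolding free_eq_def by (induction rule: equivclp_induct) auto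
qed

lemma wval_on_words: "w \<in> words S \<Longrightarrow> wval_on G S w = wval G w"
  by (induction w) (simp_all add: wval_on_Cons wval_def words_def)

lemma wval_subgroup:
  assumes "subgroup H G" and "S \<subseteq> H" and "w \<in> words S"
  shows "wval (G\<lparr>carrier := H\<rparr>) w = wval G w"
  using assms(3)
proof (induction w)
  case (Cons l ls)
  then have "fst l \<in> H" "ls \<in> words S"
    using assms(2) by (auto simp: words_def)
  with Cons assms(1) show ?case
    by (simp add: wval_def m_inv_consistent)
qed (simp add: wval_def)

lemma wval_on_phi_ext:
  assumes S: "S \<subseteq> carrier G" and c: "c \<in> carrier G"
    and f: "\<forall>a \<in> S. wval_on G S (f a) = c \<otimes> a \<otimes> inv c"
    and "u \<in> words S"
  shows "wval_on G S (phi_ext f u) = c \<otimes> wval_on G S u \<otimes> inv c"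
  using assms(4)
proof (induction u)
  case Nil
  then show ?case using c by (simp add: phi_ext_def)
next
  case (Cons l ls)
  have l: "fst l \<in> S" and ls: "ls \<in> words S"
    using Cons.prems by (auto simp: words_def)
  then have lG: "fst l \<in> carrier G" using S by blast
  define y where "y = (if snd l then fst l else inv (fst l))"
  have yG: "y \<in> carrier G" using lG by (simp add: y_def)
  have "wval_on G S (phi_ext f [l]) = c \<otimes> y \<otimes> inv c"
    using f l lG c S
    by (auto simp: y_def phi_ext_def wval_on_winv inv_mult_group m_assoc)
  then have "wval_on G S (phi_ext f (l # ls)) = (c \<otimes> y \<otimes> inv c) \<otimes> (c \<otimes> wval_on G S ls \<otimes> inv c)"
    using Cons.IH[OF ls] wval_on_append[OF S, of "phi_ext f [l]"] phi_ext_append[of f "[l]" ls]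
    by simp
  also have "\<dots> = c \<otimes> (y \<otimes> wval_on G S ls) \<otimes> inv c"
    using yG c S by (simp add: m_assoc inv_solve_left')
  finally show ?case
    using l by (simp add: wval_on_Cons y_def)
qed

lemma null_hom_imp_wval_on_eq_one:
  assumes S: "S \<subseteq> carrier G" and T: "\<And>r. r \<in> T \<Longrightarrow> wval_on G S r = \<one>"
    and "null_hom S T u"
  shows "wval_on G S u = \<one>"
proof -
  obtain es where es: "null_expr S T u es"
    using assms(3) by (auto simp: null_hom_def)
  have conj: "wval_on G S (x @ r @ winv x) = \<one>" if "r \<in> T \<or> r \<in> winv ` T" for x r
    using that T S by (auto simp: wval_on_append wval_on_winv)
  have "wval_on G S (concat (map (\<lambda>(x, r). x @ r @ winv x) es')) = \<one>"
    if "\<forall>(x, r) \<in> set es'. r \<in> T \<or> r \<in> winv ` T" for es'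
    using that
  proof (induction es')
    case (Cons e es')
    obtain x r where "e = (x, r)" by fastforce
    with Cons show ?case
      using conj[of r x] wval_on_append[OF S, of "x @ r @ winv x"] by auto
  qed simp
  then have "wval_on G S (concat (map (\<lambda>(x, r). x @ r @ winv x) es)) = \<one>"
    using es unfolding null_expr_def by fastforce
  moreover have "free_eq u (concat (map (\<lambda>(x, r). x @ r @ winv x) es))"
    using es by (simp add: null_expr_def)
  ultimately show ?thesis
    using wval_on_free_eq[OF S] by simp
qed

lemma presents_subgroup_wval_eq_one_iff:
  assumes "subgroup H G" and "presents (G\<lparr>carrier := H\<rparr>) A R" and "u \<in> words A"
  shows "wval G u = \<one> \<longleftrightarrow> null_hom A R u"
proof -
  have "A \<subseteq> H"
    using assms(2) by (simp add: presents_def)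
  then show ?thesis
    using assms wval_subgroup[OF assms(1), of A u] by (auto simp: presents_def)
qed

lemma wval_on_Rbar_Sbar_eq_one:
  assumes A: "A \<subseteq> carrier G" and t: "t \<in> carrier G"
    and R: "\<forall>r \<in> R. r \<in> words A \<and> wval G r = \<one>"
    and w: "\<forall>a \<in> A. w a \<in> words A \<and> wval G (w a) = t \<otimes> a \<otimes> inv t"
    and \<Phi>: "\<forall>k. \<forall>a \<in> A. \<Phi> k a \<in> words A \<and> wval G (\<Phi> k a) = t [^] k \<otimes> a \<otimes> inv (t [^] k)"
    and r: "r \<in> Rbar \<Phi> R \<union> Sbar \<Phi> A w"
  shows "wval_on G A r = \<one>"
proof -
  have tk: "t [^] (k::int) \<in> carrier G" for k
    using t by simp
  have phi_ext_\<Phi>: "wval_on G A (phi_ext (\<Phi> k) u) = t [^] k \<otimes> wval_on G A u \<otimes> inv (t [^] k)"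
    if "u \<in> words A" for k u
    using wval_on_phi_ext[OF A tk _ that] \<Phi> by (simp add: wval_on_words)
  show ?thesis
    using r unfolding Rbar_def Sbar_def
  proof safe
    fix r0 k
    assume "r0 \<in> R"
    then show "wval_on G A (phi_ext (\<Phi> k) r0) = \<one>"
      using R phi_ext_\<Phi> tk by (simp add: wval_on_words)
  next
    fix a k
    assume a: "a \<in> A"
    then have aG: "a \<in> carrier G" using A by blast
    have "wval_on G A (phi_ext (\<Phi> k) (w a)) = t [^] k \<otimes> (t \<otimes> a \<otimes> inv t) \<otimes> inv (t [^] k)"
      using phi_ext_\<Phi> w a by (simp add: wval_on_words)
    also have "\<dots> = t [^] (k + 1) \<otimes> a \<otimes> inv (t [^] (k + 1))"
      using t aG tk[of k] by (simp add: int_pow_mult inv_mult_group m_assoc)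
    also have "\<dots> = wval_on G A (\<Phi> (k + 1) a)"
      using \<Phi> a by (simp add: wval_on_words)
    finally show "wval_on G A (\<Phi> (k + 1) a @ winv (phi_ext (\<Phi> k) (w a))) = \<one>"
      using A by (simp add: wval_on_append wval_on_winv)
  qed
qed

lemma null_hom_Rbar_Sbar_imp_null_hom_Sset:
  assumes K: "subgroup K G" and pres: "presents (G\<lparr>carrier := K\<rparr>) A R" and t: "t \<in> carrier G"
    and w: "\<forall>a \<in> A. w a \<in> words A \<and> wval G (w a) = t \<otimes> a \<otimes> inv t"
    and \<Phi>: "\<forall>k. \<forall>a \<in> A. \<Phi> k a \<in> words A \<and> wval G (\<Phi> k a) = t [^] k \<otimes> a \<otimes> inv (t [^] k)"
    and u: "null_hom A (Rbar \<Phi> R \<union> Sbar \<Phi> A w) u"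
  shows "null_hom (insert t A) (R \<union> Sset t A w) u"
proof -
  have A: "A \<subseteq> carrier G" and RA: "R \<subseteq> words A"
    using pres subgroup.subset[OF K] by (auto simp: presents_def)
  have R: "\<forall>r \<in> R. r \<in> words A \<and> wval G r = \<one>"
    using RA presents_subgroup_wval_eq_one_iff[OF K pres] null_hom_relator[of _ R A]
    by (simp add: subset_iff)
  have "u \<in> words A"
    using u by (simp add: null_hom_def)
  moreover have "wval_on G A u = \<one>"
    using null_hom_imp_wval_on_eq_one[OF A wval_on_Rbar_Sbar_eq_one[OF A t R w \<Phi>] u] .
  ultimately have "null_hom A R u"
    using presents_subgroup_wval_eq_one_iff[OF K pres] by (simp add: wval_on_words)
  then show ?thesis
    by (rule null_hom_mono) auto
qed

end

lemma t_not_in_normal_subgroup: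
  assumes "K \<lhd> G" and "G Mod K \<cong> integer_group"
    and "generate (G Mod K) {K #>\<^bsub>G\<^esub> t} = carrier (G Mod K)"
  shows "t \<notin> K"
proof
  assume tK: "t \<in> K"
  interpret K: normal K G by fact
  have "K #>\<^bsub>G\<^esub> t = K"
    using K.rcos_const tK by blast
  then have "carrier (G Mod K) = {K}"
    using assms(3) group.generate_one[OF K.factorgroup_is_group] by simp
  moreover obtain h where "h \<in> iso (G Mod K) integer_group"
    using assms(2) unfolding is_iso_def by blast
  ultimately have "(UNIV :: int set) = {h K}"
    by (simp add: iso_def bij_betw_def)
  then show False by (metis UNIV_I singletonD zero_neq_one)
qed

subsection \<open>Eliminating the stable letter\<close>

definition t_exp :: "'a \<Rightarrow> 'a \<times> bool \<Rightarrow> int" where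
  "t_exp t l = (if fst l = t then (if snd l then 1 else -1) else 0)"

definition t_exp_sum :: "'a \<Rightarrow> 'a word \<Rightarrow> int" where
  "t_exp_sum t u = sum_list (map (t_exp t) u)"

fun t_retract :: "'a \<Rightarrow> (int \<Rightarrow> 'a \<Rightarrow> 'a word) \<Rightarrow> int \<Rightarrow> 'a word \<Rightarrow> 'a word" where
  "t_retract t \<Phi> k [] = []"
| "t_retract t \<Phi> k (l # u) =
    (if fst l = t then t_retract t \<Phi> (k + t_exp t l) u else phi_ext (\<Phi> k) [l] @ t_retract t \<Phi> k u)"

lemma t_exp_sum_Nil [simp]: "t_exp_sum t [] = 0"
  by (simp add: t_exp_sum_def)

lemma t_exp_sum_Cons [simp]: "t_exp_sum t (l # u) = t_exp t l + t_exp_sum t u"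
  by (simp add: t_exp_sum_def)

lemma t_exp_sum_append [simp]: "t_exp_sum t (u @ v) = t_exp_sum t u + t_exp_sum t v"
  by (simp add: t_exp_sum_def)

lemma t_exp_inv_letter [simp]: "t_exp t (inv_letter l) = - t_exp t l"
  by (simp add: t_exp_def inv_letter_def)

lemma t_exp_sum_winv [simp]: "t_exp_sum t (winv u) = - t_exp_sum t u"
  by (induction u) auto

lemma abs_t_exp_sum_le_length: "\<bar>t_exp_sum t u\<bar> \<le> int (length u)"
  by (induction u) (auto simp: t_exp_def)

lemma t_exp_sum_eq_0: "t \<notin> fst ` set u \<Longrightarrow> t_exp_sum t u = 0"
  by (induction u) (auto simp: t_exp_def)

lemma t_retract_append:
  "t_retract t \<Phi> k (u @ v) = t_retract t \<Phi> k u @ t_retract t \<Phi> (k + t_exp_sum t u) v"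
  by (induction u arbitrary: k) (auto simp: t_exp_def add.assoc)

lemma t_retract_winv: "t_retract t \<Phi> (k + t_exp_sum t u) (winv u) = winv (t_retract t \<Phi> k u)"
proof (induction u arbitrary: k)
  case (Cons l u)
  have IH: "t_retract t \<Phi> (k + t_exp t l + t_exp_sum t u) (winv u) = winv (t_retract t \<Phi> (k + t_exp t l) u)"
    using Cons[of "k + t_exp t l"] by (simp add: add.assoc)
  show ?case
  proof (cases "fst l = t")
    case True
    with IH show ?thesis
      by (simp add: t_retract_append add.assoc inv_letter_def)
  next
    case False
    then have "t_exp t l = 0" by (simp add: t_exp_def)
    with IH False show ?thesis
      by (simp add: t_retract_append inv_letter_def phi_ext_inv_letter[unfolded inv_letter_def])
  qed
qed simp

lemma t_retract_winv_0: "t_exp_sum t u = 0 \<Longrightarrow> t_retract t \<Phi> k (winv u) = winv (t_retract t \<Phi> k u)"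
  using t_retract_winv[of t \<Phi> k u] by simp

lemma t_retract_free_eq:
  assumes "free_eq u v"
  shows "free_eq (t_retract t \<Phi> k u) (t_retract t \<Phi> k v)"
proof -
  have "free_eq (t_retract t \<Phi> k x) (t_retract t \<Phi> k y)" if "red1 x y" for x y
    using that
  proof cases
    case (1 p l q)
    let ?j = "k + t_exp_sum t p" and ?P = "t_retract t \<Phi> k p"
    have "free_eq (?P @ t_retract t \<Phi> ?j (l # inv_letter l # q)) (?P @ t_retract t \<Phi> ?j q)"
    proof (cases "fst l = t")
      case True
      then show ?thesis by (simp add: inv_letter_def t_exp_def)
    next
      case False
      then show ?thesis
        using free_eq_cancel[of ?P "phi_ext (\<Phi> ?j) [l]" "t_retract t \<Phi> ?j q"]
        by (simp add: inv_letter_def phi_ext_inv_letter[unfolded inv_letter_def])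
    qed
    with 1 show ?thesis
      by (simp add: t_retract_append)
  qed
  with assms show ?thesis
    unfolding free_eq_def by (rule equivclp_map[rotated]) (simp add: free_eq_def)
qed

lemma t_retract_eq_phi_ext: "t \<notin> fst ` set u \<Longrightarrow> t_retract t \<Phi> k u = phi_ext (\<Phi> k) u"
  by (induction u) (auto simp: phi_ext_def)

lemma t_retract_words:
  assumes "\<forall>j. \<forall>a \<in> B. \<Phi> j a \<in> words B" and "u \<in> words (insert t B)"
  shows "t_retract t \<Phi> k u \<in> words B"
  using assms(2)
proof (induction u arbitrary: k)
  case (Cons l u)
  have "phi_ext (\<Phi> k) [l] \<in> words B" if "fst l \<noteq> t"
  proof (rule phi_ext_words)
    show "[l] \<in> words B"
      using Cons.prems that by (auto simp: words_def)
  qed (use assms(1) in blast)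
  with Cons show ?case
    by (auto simp: words_def)
qed (simp add: words_def)

lemma t_retract_relator:
  assumes tA: "t \<notin> A" and RA: "R \<subseteq> words A" and wA: "\<forall>a \<in> A. w a \<in> words A"
    and r: "r \<in> R \<union> Sset t A w"
  shows "t_exp_sum t r = 0 \<and> t_retract t \<Phi> k r \<in> Rbar \<Phi> R \<union> Sbar \<Phi> A w
    \<and> Kidx \<Phi> A R w (t_retract t \<Phi> k r) \<le> nat \<bar>k\<bar>"
proof (cases "r \<in> R")
  case True
  then have no_t: "t \<notin> fst ` set r"
    using RA tA by (auto simp: words_def)
  then have retract: "t_retract t \<Phi> k r = phi_ext (\<Phi> k) r"
    by (rule t_retract_eq_phi_ext)
  have "Kidx \<Phi> A R w (t_retract t \<Phi> k r) \<le> nat \<bar>k\<bar>"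
    unfolding Kidx_def retract by (rule Least_le) (use True in blast)
  then show ?thesis
    using t_exp_sum_eq_0[OF no_t] retract True by (auto simp: Rbar_def)
next
  case False
  then obtain a where a: "a \<in> A" and r_eq: "r = [(t, True), (a, True), (t, False)] @ winv (w a)"
    using r by (auto simp: Sset_def)
  have no_t: "t \<notin> fst ` set (w a)"
    using wA a tA by (auto simp: words_def)
  have "a \<noteq> t" using a tA by auto
  then have exp: "t_exp_sum t r = 0" and
    retract: "t_retract t \<Phi> k r = \<Phi> (k + 1) a @ winv (phi_ext (\<Phi> k) (w a))"
    using r_eq t_exp_sum_eq_0[OF no_t] t_retract_winv_0[OF t_exp_sum_eq_0[OF no_t]]
      t_retract_eq_phi_ext[OF no_t]
    by (simp_all add: t_retract_append t_exp_def phi_ext_def)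
  have "Kidx \<Phi> A R w (t_retract t \<Phi> k r) \<le> nat \<bar>k\<bar>"
    unfolding Kidx_def retract by (rule Least_le) (use a in blast)
  then show ?thesis
    using exp retract a by (auto simp: Sbar_def)
qed

lemma t_retract_conjugates:
  assumes "\<forall>(x, r) \<in> set es. t_exp_sum t r = 0"
  shows "t_retract t \<Phi> k (concat (map (\<lambda>(x, r). x @ r @ winv x) es)) =
    concat (map (\<lambda>(x, r). x @ r @ winv x)
      (map (\<lambda>(x, r). (t_retract t \<Phi> k x, t_retract t \<Phi> (k + t_exp_sum t x) r)) es))"
  using assms
proof (induction es)
  case (Cons e es)
  obtain x r where e: "e = (x, r)" by fastforce
  with Cons.prems have "t_exp_sum t r = 0" by auto
  then have "t_exp_sum t (x @ r @ winv x) = 0"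
    and "t_retract t \<Phi> k (x @ r @ winv x) =
      t_retract t \<Phi> k x @ t_retract t \<Phi> (k + t_exp_sum t x) r @ winv (t_retract t \<Phi> k x)"
    using t_retract_winv[of t \<Phi> k x] by (simp_all add: t_retract_append)
  with Cons e show ?case
    using t_retract_append[of t \<Phi> k "x @ r @ winv x"] by simp
qed simp

lemma null_expr_t_retract:
  assumes tA: "t \<notin> A" and RA: "R \<subseteq> words A" and wA: "\<forall>a \<in> A. w a \<in> words A"
    and \<Phi>A: "\<forall>k. \<forall>a \<in> A. \<Phi> k a \<in> words A" and \<Phi>0: "\<forall>a \<in> A. \<Phi> 0 a = [(a, True)]"
    and u: "u \<in> words A"
    and es: "null_expr (insert t A) (R \<union> Sset t A w) u es"
    and radius: "\<forall>(x, r) \<in> set es. length x \<le> m"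
  obtains es' where "null_expr A (Rbar \<Phi> R \<union> Sbar \<Phi> A w) u es'" and "length es' = length es"
    and "\<forall>(x, r) \<in> set es'. \<exists>r0 \<in> Rbar \<Phi> R \<union> Sbar \<Phi> A w.
      (r = r0 \<or> r = winv r0) \<and> Kidx \<Phi> A R w r0 \<le> m"
proof
  let ?T = "Rbar \<Phi> R \<union> Sbar \<Phi> A w"
  define es' where "es' = map (\<lambda>(x, r). (t_retract t \<Phi> 0 x, t_retract t \<Phi> (t_exp_sum t x) r)) es"
  have relator: "t_exp_sum t r = 0 \<and> (\<exists>r0 \<in> ?T. (t_retract t \<Phi> (t_exp_sum t x) r = r0
      \<or> t_retract t \<Phi> (t_exp_sum t x) r = winv r0) \<and> Kidx \<Phi> A R w r0 \<le> m)"
    if xr: "(x, r) \<in> set es" for x r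
  proof -
    have "nat \<bar>t_exp_sum t x\<bar> \<le> m"
      using radius xr abs_t_exp_sum_le_length[of t x] by fastforce
    moreover have "r \<in> R \<union> Sset t A w \<or> r \<in> winv ` (R \<union> Sset t A w)"
      using es xr by (auto simp: null_expr_def)
    ultimately show ?thesis
      using t_retract_relator[OF tA RA wA, of _ \<Phi> "t_exp_sum t x"] t_retract_winv_0
      by fastforce
  qed
  have "t \<notin> fst ` set u"
    using u tA by (auto simp: words_def)
  then have "t_retract t \<Phi> 0 u = u"
    using phi_ext_eq_self[OF \<Phi>0 u] by (simp add: t_retract_eq_phi_ext)
  moreover have "free_eq (t_retract t \<Phi> 0 u)
      (t_retract t \<Phi> 0 (concat (map (\<lambda>(x, r). x @ r @ winv x) es)))"
    using es by (simp add: null_expr_def t_retract_free_eq)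
  moreover have "t_retract t \<Phi> 0 (concat (map (\<lambda>(x, r). x @ r @ winv x) es))
      = concat (map (\<lambda>(x, r). x @ r @ winv x) es')"
    unfolding es'_def using relator by (subst t_retract_conjugates) auto
  moreover have "t_retract t \<Phi> 0 x \<in> words A" if "(x, r) \<in> set es" for x r
    using es that \<Phi>A by (auto simp: null_expr_def intro: t_retract_words)
  ultimately show "null_expr A ?T u es'"
    using relator unfolding null_expr_def es'_def by fastforce
  show "length es' = length es"
    by (simp add: es'_def)
  show "\<forall>(x, r) \<in> set es'. \<exists>r0 \<in> ?T. (r = r0 \<or> r = winv r0) \<and> Kidx \<Phi> A R w r0 \<le> m"
    using relator unfolding es'_def by fastforce
qed

lemma area_pen_pair_of_area_radius_pair:
  assumes tA: "t \<notin> A" and RA: "R \<subseteq> words A" and wA: "\<forall>a \<in> A. w a \<in> words A"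
    and \<Phi>A: "\<forall>k. \<forall>a \<in> A. \<Phi> k a \<in> words A" and \<Phi>0: "\<forall>a \<in> A. \<Phi> 0 a = [(a, True)]"
    and null_hom_\<Gamma>: "\<And>u. null_hom A (Rbar \<Phi> R \<union> Sbar \<Phi> A w) u \<Longrightarrow>
      null_hom (insert t A) (R \<union> Sset t A w) u"
    and area_radius: "area_radius_pair (insert t A) (R \<union> Sset t A w) \<alpha> \<rho>"
  shows "area_pen_pair A (Rbar \<Phi> R \<union> Sbar \<Phi> A w) (Kidx \<Phi> A R w) \<alpha> \<rho>"
  unfolding area_pen_pair_def
proof (intro allI impI, elim conjE)
  fix n u
  assume u: "null_hom A (Rbar \<Phi> R \<union> Sbar \<Phi> A w) u" and len: "length u \<le> n"
  obtain es where es: "null_expr (insert t A) (R \<union> Sset t A w) u es" "length es \<le> \<alpha> n"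
    "\<forall>(x, r) \<in> set es. length x \<le> \<rho> n"
    using area_radius null_hom_\<Gamma>[OF u] len unfolding area_radius_pair_def by blast
  have "u \<in> words A"
    using u by (simp add: null_hom_def)
  then obtain es' where "null_expr A (Rbar \<Phi> R \<union> Sbar \<Phi> A w) u es'" "length es' = length es"
    "\<forall>(x, r) \<in> set es'. \<exists>r0 \<in> Rbar \<Phi> R \<union> Sbar \<Phi> A w.
      (r = r0 \<or> r = winv r0) \<and> Kidx \<Phi> A R w r0 \<le> \<rho> n"
    by (rule null_expr_t_retract[OF tA RA wA \<Phi>A \<Phi>0 _ es(1) es(3)])
  with es(2) show "\<exists>es. null_expr A (Rbar \<Phi> R \<union> Sbar \<Phi> A w) u es \<and> length es \<le> \<alpha> n \<and>
    (\<forall>(x, r) \<in> set es. \<exists>r0 \<in> Rbar \<Phi> R \<union> Sbar \<Phi> A w.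
      (r = r0 \<or> r = winv r0) \<and> Kidx \<Phi> A R w r0 \<le> \<rho> n)"
    by auto
qed

theorem theorem3p1:
  fixes G :: "('g, 'b) monoid_scheme" and K :: "'g set" and t :: 'g
    and A :: "'g set" and R :: "'g word set" and w :: "'g \<Rightarrow> 'g word"
    and \<Phi> :: "int \<Rightarrow> 'g \<Rightarrow> 'g word" and \<alpha> \<rho> :: "nat \<Rightarrow> nat"
  assumes "group G" and "K \<lhd> G"
    and "finitely_presented G" and "finitely_presented (G\<lparr>carrier := K\<rparr>)"
    and "G Mod K \<cong> integer_group"
    and "t \<in> carrier G"
    and "generate (G Mod K) {K #>\<^bsub>G\<^esub> t} = carrier (G Mod K)"
    and "finite A" and "A \<subseteq> K" and "generate G A = K"
    and "presents (G\<lparr>carrier := K\<rparr>) A R"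
    and "\<forall>a \<in> A. w a \<in> words A \<and> wval G (w a) = t \<otimes>\<^bsub>G\<^esub> a \<otimes>\<^bsub>G\<^esub> inv\<^bsub>G\<^esub> t"
    and "\<forall>k. \<forall>a \<in> A. \<Phi> k a \<in> words A \<and>
           wval G (\<Phi> k a) = (t [^]\<^bsub>G\<^esub> k) \<otimes>\<^bsub>G\<^esub> a \<otimes>\<^bsub>G\<^esub> inv\<^bsub>G\<^esub> (t [^]\<^bsub>G\<^esub> k)"
    and "\<forall>a \<in> A. \<Phi> 0 a = [(a, True)]"
    and "area_radius_pair (insert t A) (R \<union> Sset t A w) \<alpha> \<rho>"
  shows "area_pen_pair A (Rbar \<Phi> R \<union> Sbar \<Phi> A w) (Kidx \<Phi> A R w) \<alpha> \<rho>"
proof -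
  interpret group G by fact
  have K: "subgroup K G"
    using assms(2) by (rule normal_imp_subgroup)
  have tA: "t \<notin> A"
    using t_not_in_normal_subgroup[OF assms(2,5,7)] assms(9) by blast
  have RA: "R \<subseteq> words A"
    using assms(11) by (simp add: presents_def)
  show ?thesis
  proof (rule area_pen_pair_of_area_radius_pair[OF tA RA])
    show "null_hom (insert t A) (R \<union> Sset t A w) u"
      if "null_hom A (Rbar \<Phi> R \<union> Sbar \<Phi> A w) u" for u
      by (rule null_hom_Rbar_Sbar_imp_null_hom_Sset[OF K assms(11,6,12,13) that])
  qed (use assms(12-15) in simp_all)
qed

end
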